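(* Fix $B>1$ and $\alpha>0$. For a block $A$ (a map between real vector spaces) with approximation $A^\alpha$, let $$E_A^\alpha(e)=\sup_{\|\mathbf{x}+\mathbf{e}\|_\infty\le B,\ \|\mathbf{e}\|_\infty\le e}\|A^\alpha(\mathbf{x}+\mathbf{e})-A(\mathbf{x})\|_\infty .$$ Then for every $e\ge0$: (a) If $A$ is a linear block $A(\mathbf{x})=\mathbf{A}\mathbf{x}+\mathbf{b}$ with $A^\alpha=A$, then $E_A^\alpha(e)\le\|\mathbf{A}\|_\infty e$, where $\|\mathbf{A}\|_\infty$ is the matrix infinity norm (maximum absolute row sum). (b) If $A$ is a ReLU block (coordinatewise $\mathrm{ReLU}(x)=\max(x,0)$) and $A^\alpha$ applies $\tilde r_{\alpha,B}$ coordinatewise, then $E_A^\alpha(e)\le B2^{-\alpha}+e$. (c) If $A$ is a max-pooling block with kernel size $k_0\le 10$ (each output coordinate is the maximum of a window of $k_0^2$ input coordinates), $A^\alpha$ replaces each such maximum by $\tilde M_{\alpha,k_0^2,B}$ applied to the same window, and $\alpha\ge 4$, then $E_A^\alpha(e)\le 10B\lceil\log_2 k_0^2\rceil 2^{-\alpha}+e$. (d) If $A$ is a softmax block $A(\mathbf{x})=\big(\exp(x_i)/\sum_j\exp(x_j)\big)_{1\le i\le N}$ with $A^\alpha=A$, then $E_A^\alpha(e)\le e/2$.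
   Context: Let $p_\alpha$ be a polynomial such that $m_\alpha(a,b)=\frac{(a+b)+(a-b)p_\alpha(a-b)}{2}$ satisfies $|m_\alpha(a,b)-\max(a,b)|\le2^{-\alpha}$ for all $a,b\in[0,1]$. Define $r_\alpha(x)=\frac{x+xp_\alpha(x)}{2}$ and $\tilde r_{\alpha,B}(x)=B\,r_\alpha(x/B)$. Define $M_{\alpha,1}(x_1)=x_1$, $M_{\alpha,2k}(x_1,\dots,x_{2k})=m_\alpha(M_{\alpha,k}(x_1,\dots,x_k),M_{\alpha,k}(x_{k+1},\dots,x_{2k}))$, $M_{\alpha,2k+1}(x_1,\dots,x_{2k+1})=m_\alpha(M_{\alpha,k}(x_1,\dots,x_k),M_{\alpha,k+1}(x_{k+1},\dots,x_{2k+1}))$, and $$\tilde M_{\alpha,n,B}(x_1,\dots,x_n)=B'\Big(M_{\alpha,n}\big(\tfrac{x_1}{B'}+0.5,\dots,\tfrac{x_n}{B'}+0.5\big)-0.5\Big),\quad B'=\frac{B}{0.5-(\lceil\log_2 n\rceil-1)2^{-\alpha}}.$$ *)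

theory Defs
  imports "HOL-Analysis.Analysis" "HOL-Computational_Algebra.Polynomial"
begin

text \<open>Polynomial approximation of max: m_alpha(a,b) = ((a+b) + (a-b) p(a-b))/2.\<close>
definition malpha :: "real poly \<Rightarrow> real \<Rightarrow> real \<Rightarrow> real" where
  "malpha p a b = ((a + b) + (a - b) * poly p (a - b)) / 2"

definition ralpha :: "real poly \<Rightarrow> real \<Rightarrow> real" where
  "ralpha p x = (x + x * poly p x) / 2"

definition rtilde :: "real poly \<Rightarrow> real \<Rightarrow> real \<Rightarrow> real" where
  "rtilde p B x = B * ralpha p (x / B)"

text \<open>Tree of m_alpha's: M_1(x)=x, M_n splits into the first floor(n/2) and the
  remaining ceil(n/2) arguments (this covers both the 2k and 2k+1 cases).
  The value on the empty list is an irrelevant default.\<close>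
function Mtree :: "real poly \<Rightarrow> real list \<Rightarrow> real" where
  "Mtree p xs = (if length xs \<le> 1 then (if xs = [] then 0 else hd xs)
     else malpha p (Mtree p (take (length xs div 2) xs)) (Mtree p (drop (length xs div 2) xs)))"
  by auto
termination
  by (relation "Wellfounded.measure (\<lambda>(p, xs). length xs)") auto

declare Mtree.simps[simp del]

definition Mtilde :: "real poly \<Rightarrow> real \<Rightarrow> nat \<Rightarrow> real \<Rightarrow> real list \<Rightarrow> real" where
  "Mtilde p \<alpha> n B xs =
     (let B' = B / (0.5 - (real_of_int \<lceil>log 2 (real n)\<rceil> - 1) * 2 powr (-\<alpha>))
      in B' * (Mtree p (map (\<lambda>x. x / B' + 0.5) xs) - 0.5))"

definition matinfnorm :: "real^'n^'m \<Rightarrow> real" where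
  "matinfnorm M = Max (range (\<lambda>i. \<Sum>j\<in>UNIV. \<bar>M $ i $ j\<bar>))"

definition blockerr :: "real \<Rightarrow> (real^'n \<Rightarrow> real^'m) \<Rightarrow> (real^'n \<Rightarrow> real^'m) \<Rightarrow> real \<Rightarrow> ereal" where
  "blockerr B A Aa e = Sup {ereal (infnorm (Aa (x + d) - A x)) | x d.
       infnorm (x + d) \<le> B \<and> infnorm d \<le> e}"

end

theory Submission
  imports Defs
begin

(* (a) The error of an affine block is M d, whose i-th entry is at most the i-th absolute
   row sum times e.
   (b) ReLU is 1-Lipschitz, and r_alpha(t) = m_alpha(t, 0) for t >= 0, r_alpha(t) = m_alpha(0, -t) + t
   for t < 0; rescaling by B turns the error 2^-alpha into B 2^-alpha.
   (c) Max is 1-Lipschitz for the sup norm. The affine map in M~ sends [-B, B] into [c, 1 - c]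
   with c = (L - 1) 2^-alpha, L = ceil(log2 n); along the balanced tree of depth L each level adds
   at most 2^-alpha while all values stay in [0, 1], so the tree is within L 2^-alpha of the
   maximum, and rescaling multiplies this by B' <= 8B when n <= 100 and alpha >= 4.
   (d) The i-th softmax coordinate is sigmoid(x_i - log sum_{j ~= i} exp x_j); the sigmoid is
   1/4-Lipschitz and log-sum-exp is 1-Lipschitz for the sup norm, so the argument moves by at
   most 2e. *)

lemma infnorm_le_cart:
  fixes x :: "real^'n"
  assumes "\<And>i. \<bar>x $ i\<bar> \<le> c"
  shows "infnorm x \<le> c"
  unfolding infnorm_cart by (rule cSup_least) (use assms in auto)

lemma blockerr_le_coordinatewise:
  fixes A Aa :: "real^'n \<Rightarrow> real^'m"
  assumes "\<And>x d i. (\<And>j. \<bar>(x + d) $ j\<bar> \<le> B) \<Longrightarrow> (\<And>j. \<bar>d $ j\<bar> \<le> e) \<Longrightarrow>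
             \<bar>Aa (x + d) $ i - A x $ i\<bar> \<le> c"
  shows "blockerr B A Aa e \<le> ereal c"
  unfolding blockerr_def
proof (rule Sup_least, clarify)
  fix x d :: "real^'n"
  assume "infnorm (x + d) \<le> B" "infnorm d \<le> e"
  then have "\<bar>(x + d) $ j\<bar> \<le> B" "\<bar>d $ j\<bar> \<le> e" for j
    using component_le_infnorm_cart[of "x + d" j] component_le_infnorm_cart[of d j] by linarith+
  then show "ereal (infnorm (Aa (x + d) - A x)) \<le> ereal c"
    by (auto intro!: infnorm_le_cart assms)
qed

lemma abs_matrix_vector_mult_component_le:
  fixes M :: "real^'n^'m" and d :: "real^'n"
  assumes "\<And>j. \<bar>d $ j\<bar> \<le> e"
  shows "\<bar>(M *v d) $ i\<bar> \<le> matinfnorm M * e"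
proof -
  have "e \<ge> 0" using assms[of undefined] by linarith
  have "\<bar>(M *v d) $ i\<bar> = \<bar>\<Sum>j\<in>UNIV. M $ i $ j * d $ j\<bar>"
    by (simp add: matrix_vector_mult_def)
  also have "\<dots> \<le> (\<Sum>j\<in>UNIV. \<bar>M $ i $ j\<bar> * e)"
    by (rule order.trans[OF sum_abs]) (auto intro!: sum_mono mult_left_mono assms simp: abs_mult)
  also have "\<dots> = (\<Sum>j\<in>UNIV. \<bar>M $ i $ j\<bar>) * e"
    by (simp add: sum_distrib_right)
  also have "\<dots> \<le> matinfnorm M * e"
    unfolding matinfnorm_def using \<open>e \<ge> 0\<close> by (intro mult_right_mono Max_ge) auto
  finally show ?thesis .
qed

lemma blockerr_affine:
  fixes M :: "real^'n^'m" and b :: "real^'m"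
  shows "blockerr B (\<lambda>x. M *v x + b) (\<lambda>x. M *v x + b) e \<le> ereal (matinfnorm M * e)"
proof (rule blockerr_le_coordinatewise)
  fix x d :: "real^'n" and i
  assume "\<And>j. \<bar>d $ j\<bar> \<le> e"
  then show "\<bar>(M *v (x + d) + b) $ i - (M *v x + b) $ i\<bar> \<le> matinfnorm M * e"
    using abs_matrix_vector_mult_component_le[of d e M i]
    by (simp add: matrix_vector_right_distrib)
qed

lemma ralpha_approx_relu:
  assumes p: "\<forall>a\<in>{0..1}. \<forall>b\<in>{0..1}. \<bar>malpha p a b - max a b\<bar> \<le> \<epsilon>"
    and "\<bar>t\<bar> \<le> 1"
  shows "\<bar>ralpha p t - max t 0\<bar> \<le> \<epsilon>"
proof (cases "t \<ge> 0")
  case True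
  then have "\<bar>malpha p t 0 - max t 0\<bar> \<le> \<epsilon>"
    using p[rule_format, of t 0] \<open>\<bar>t\<bar> \<le> 1\<close> by auto
  then show ?thesis by (simp add: malpha_def ralpha_def)
next
  case False
  then have "\<bar>malpha p 0 (-t) - max 0 (-t)\<bar> \<le> \<epsilon>"
    using p[rule_format, of 0 "-t"] \<open>\<bar>t\<bar> \<le> 1\<close> by auto
  moreover have "malpha p 0 (-t) = ralpha p t - t"
    by (simp add: malpha_def ralpha_def field_simps)
  ultimately show ?thesis using False by auto
qed

lemma rtilde_approx_relu:
  assumes p: "\<forall>a\<in>{0..1}. \<forall>b\<in>{0..1}. \<bar>malpha p a b - max a b\<bar> \<le> \<epsilon>"
    and "B > 0" "\<bar>y\<bar> \<le> B"
  shows "\<bar>rtilde p B y - max y 0\<bar> \<le> B * \<epsilon>"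
proof -
  have "\<bar>y / B\<bar> \<le> 1" using assms(2,3) by (simp add: abs_divide)
  have "max y 0 = B * max (y / B) 0"
    using \<open>B > 0\<close> by (simp add: max_def field_simps)
  then have "\<bar>rtilde p B y - max y 0\<bar> = B * \<bar>ralpha p (y / B) - max (y / B) 0\<bar>"
    using \<open>B > 0\<close> by (simp add: rtilde_def abs_mult flip: right_diff_distrib)
  also have "\<dots> \<le> B * \<epsilon>"
    using ralpha_approx_relu[OF p \<open>\<bar>y / B\<bar> \<le> 1\<close>] \<open>B > 0\<close> by simp
  finally show ?thesis .
qed

lemma blockerr_relu:
  assumes p: "\<forall>a\<in>{0..1}. \<forall>b\<in>{0..1}. \<bar>malpha p a b - max a b\<bar> \<le> \<epsilon>" and "B > 0"
  shows "blockerr B (\<lambda>x :: real^'k. \<chi> i. max (x $ i) 0) (\<lambda>x. \<chi> i. rtilde p B (x $ i)) e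
           \<le> ereal (B * \<epsilon> + e)"
proof (rule blockerr_le_coordinatewise)
  fix x d :: "real^'k" and i
  assume "\<And>j. \<bar>(x + d) $ j\<bar> \<le> B" "\<And>j. \<bar>d $ j\<bar> \<le> e"
  then have "\<bar>rtilde p B ((x + d) $ i) - max ((x + d) $ i) 0\<bar> \<le> B * \<epsilon>"
    using rtilde_approx_relu[OF p \<open>B > 0\<close>] by blast
  moreover have "\<bar>max ((x + d) $ i) 0 - max (x $ i) 0\<bar> \<le> e"
    using \<open>\<bar>d $ i\<bar> \<le> e\<close> by auto
  ultimately show "\<bar>(\<chi> i. rtilde p B ((x + d) $ i)) $ i - (\<chi> i. max (x $ i) 0) $ i\<bar> \<le> B * \<epsilon> + e"
    by simp
qed

definition sigmoid :: "real \<Rightarrow> real" where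
  "sigmoid t = 1 / (1 + exp (-t))"

lemma has_real_derivative_sigmoid:
  "(sigmoid has_real_derivative sigmoid t * (1 - sigmoid t)) (at t)"
proof -
  have "1 + exp (-t) > 0"
    by (intro add_pos_pos) auto
  then show ?thesis
    unfolding sigmoid_def
    by (auto intro!: derivative_eq_intros simp: field_simps power2_eq_square)
qed

lemma sigmoid_lipschitz: "\<bar>sigmoid b - sigmoid a\<bar> \<le> \<bar>b - a\<bar> / 4"
proof -
  have slope: "\<bar>sigmoid b - sigmoid a\<bar> \<le> (b - a) / 4" if "a < b" for a b
  proof -
    obtain z where z: "sigmoid b - sigmoid a = (b - a) * (sigmoid z * (1 - sigmoid z))"
      using MVT2[OF \<open>a < b\<close>, of sigmoid "\<lambda>t. sigmoid t * (1 - sigmoid t)"]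
        has_real_derivative_sigmoid by blast
    have "0 \<le> sigmoid z" "sigmoid z \<le> 1"
      unfolding sigmoid_def by (simp_all add: add_pos_pos)
    moreover have "sigmoid z * (1 - sigmoid z) \<le> 1 / 4"
      using sum_squares_ge_zero[of "sigmoid z - 1/2" 0] by (simp add: power2_eq_square algebra_simps)
    ultimately have "(b - a) * (sigmoid z * (1 - sigmoid z)) \<le> (b - a) * (1 / 4)"
      using \<open>a < b\<close> by (intro mult_left_mono) auto
    then show ?thesis
      using z \<open>a < b\<close> \<open>0 \<le> sigmoid z\<close> \<open>sigmoid z \<le> 1\<close> by (simp add: abs_mult)
  qed
  show ?thesis
    using slope[of a b] slope[of b a] by (cases a b rule: linorder_cases) (auto simp: abs_minus_commute)
qed

lemma ln_sum_exp_perturb_le: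
  fixes x d :: "'a \<Rightarrow> real"
  assumes "finite S" "S \<noteq> {}" "\<And>j. j \<in> S \<Longrightarrow> d j \<le> e"
  shows "ln (\<Sum>j\<in>S. exp (x j + d j)) \<le> e + ln (\<Sum>j\<in>S. exp (x j))"
proof -
  have pos: "(\<Sum>j\<in>S. exp (y j)) > 0" for y :: "'a \<Rightarrow> real"
    using assms(1,2) by (intro sum_pos) auto
  have "(\<Sum>j\<in>S. exp (x j + d j)) \<le> (\<Sum>j\<in>S. exp e * exp (x j))"
    using assms(3) by (intro sum_mono) (simp flip: exp_add)
  then have "ln (\<Sum>j\<in>S. exp (x j + d j)) \<le> ln (exp e * (\<Sum>j\<in>S. exp (x j)))"
    using pos[of "\<lambda>j. x j + d j"] by (simp add: sum_distrib_left)
  also have "\<dots> = e + ln (\<Sum>j\<in>S. exp (x j))"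
    using pos[of x] by (simp add: ln_mult)
  finally show ?thesis .
qed

lemma ln_sum_exp_lipschitz:
  fixes x d :: "'a \<Rightarrow> real"
  assumes "finite S" "S \<noteq> {}" "\<And>j. j \<in> S \<Longrightarrow> \<bar>d j\<bar> \<le> e"
  shows "\<bar>ln (\<Sum>j\<in>S. exp (x j + d j)) - ln (\<Sum>j\<in>S. exp (x j))\<bar> \<le> e"
proof -
  have up: "d j \<le> e" and down: "- d j \<le> e" if "j \<in> S" for j
    using assms(3)[OF that] by auto
  have "ln (\<Sum>j\<in>S. exp (x j + d j)) \<le> e + ln (\<Sum>j\<in>S. exp (x j))"
    using ln_sum_exp_perturb_le[OF assms(1,2) up] .
  moreover have "ln (\<Sum>j\<in>S. exp (x j)) \<le> e + ln (\<Sum>j\<in>S. exp (x j + d j))"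
    using ln_sum_exp_perturb_le[OF assms(1,2), of "\<lambda>j. - d j" e "\<lambda>j. x j + d j"] down by simp
  ultimately show ?thesis by (simp add: abs_le_iff)
qed

lemma softmax_eq_sigmoid:
  fixes x :: "'a \<Rightarrow> real"
  assumes "finite S" "i \<in> S" "S - {i} \<noteq> {}"
  shows "exp (x i) / (\<Sum>j\<in>S. exp (x j)) = sigmoid (x i - ln (\<Sum>j\<in>S - {i}. exp (x j)))"
proof -
  define C where "C = (\<Sum>j\<in>S - {i}. exp (x j))"
  have "C > 0" unfolding C_def using assms by (intro sum_pos) auto
  have "(\<Sum>j\<in>S. exp (x j)) = exp (x i) + C"
    unfolding C_def using assms(1,2) by (simp add: sum.remove)
  then show ?thesis
    unfolding sigmoid_def C_def[symmetric] using \<open>C > 0\<close> by (simp add: exp_diff field_simps)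
qed

lemma softmax_lipschitz:
  fixes x d :: "'a \<Rightarrow> real"
  assumes "finite S" "i \<in> S" "\<And>j. j \<in> S \<Longrightarrow> \<bar>d j\<bar> \<le> e"
  shows "\<bar>exp (x i + d i) / (\<Sum>j\<in>S. exp (x j + d j)) - exp (x i) / (\<Sum>j\<in>S. exp (x j))\<bar> \<le> e / 2"
proof (cases "S - {i} = {}")
  case True
  then have "S = {i}" using \<open>i \<in> S\<close> by auto
  then show ?thesis using assms(3)[of i] by simp
next
  case False
  have sigmoid_close: "\<bar>sigmoid a - sigmoid b\<bar> \<le> e / 2" if "\<bar>a - b\<bar> \<le> 2 * e" for a b
    using order_trans[OF sigmoid_lipschitz[of a b], of "e / 2"] that by simp
  let ?L = "\<lambda>y. ln (\<Sum>j\<in>S - {i}. exp (y j))"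
  have "\<bar>?L (\<lambda>j. x j + d j) - ?L x\<bar> \<le> e"
    using False assms by (intro ln_sum_exp_lipschitz) auto
  then have "\<bar>(x i + d i - ?L (\<lambda>j. x j + d j)) - (x i - ?L x)\<bar> \<le> 2 * e"
    using assms(3)[OF \<open>i \<in> S\<close>] by linarith
  then have "\<bar>sigmoid (x i + d i - ?L (\<lambda>j. x j + d j)) - sigmoid (x i - ?L x)\<bar> \<le> e / 2"
    by (rule sigmoid_close)
  then show ?thesis
    using softmax_eq_sigmoid[OF assms(1,2) False, of x] softmax_eq_sigmoid[OF assms(1,2) False, of "\<lambda>j. x j + d j"]
    by simp
qed

lemma blockerr_softmax:
  "blockerr B (\<lambda>x :: real^'s. \<chi> i. exp (x $ i) / (\<Sum>j\<in>UNIV. exp (x $ j)))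
              (\<lambda>x. \<chi> i. exp (x $ i) / (\<Sum>j\<in>UNIV. exp (x $ j))) e
     \<le> ereal (e / 2)"
proof (rule blockerr_le_coordinatewise)
  fix x d :: "real^'s" and i
  assume "\<And>j. \<bar>d $ j\<bar> \<le> e"
  then show "\<bar>(\<chi> i. exp ((x + d) $ i) / (\<Sum>j\<in>UNIV. exp ((x + d) $ j))) $ i -
            (\<chi> i. exp (x $ i) / (\<Sum>j\<in>UNIV. exp (x $ j))) $ i\<bar> \<le> e / 2"
    using softmax_lipschitz[of UNIV i "($) d" e "($) x"] by simp
qed

lemma Mtree_singleton [simp]: "Mtree p [a] = a"
  by (subst Mtree.simps) simp

lemma Mtree_split:
  assumes "2 \<le> length xs"
  shows "Mtree p xs = malpha p (Mtree p (take (length xs div 2) xs)) (Mtree p (drop (length xs div 2) xs))"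
  using assms by (subst Mtree.simps) auto

lemma Max_set_between:
  assumes "xs \<noteq> []" "\<forall>x\<in>set xs. a \<le> x \<and> x \<le> b"
  shows "a \<le> Max (set xs) \<and> Max (set xs) \<le> b"
  using assms by (metis List.finite_set Max_in set_empty)

text \<open>The margin \<open>c\<close> keeps every intermediate value within distance \<open>c\<close> of a
  maximum in \<open>[c, 1 - c]\<close>, hence inside \<open>[0, 1]\<close>, where \<open>malpha p\<close> is accurate.\<close>
lemma Mtree_approx_Max:
  assumes p: "\<forall>a\<in>{0..1}. \<forall>b\<in>{0..1}. \<bar>malpha p a b - max a b\<bar> \<le> \<epsilon>"
    and "xs \<noteq> []" "length xs \<le> 2 ^ k"
    and "\<forall>x\<in>set xs. c \<le> x \<and> x \<le> 1 - c" "(real k - 1) * \<epsilon> \<le> c"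
  shows "\<bar>Mtree p xs - Max (set xs)\<bar> \<le> real k * \<epsilon>"
  using assms(2-)
proof (induction k arbitrary: xs)
  case 0
  then obtain a where "xs = [a]" by (cases xs) auto
  then show ?case by simp
next
  case (Suc k)
  have "\<epsilon> \<ge> 0" using p[rule_format, of 0 0] by simp
  show ?case
  proof (cases "length xs = 1")
    case True
    then obtain a where "xs = [a]" by (cases xs) auto
    then show ?thesis using \<open>\<epsilon> \<ge> 0\<close> by simp
  next
    case False
    define ys where "ys = take (length xs div 2) xs"
    define zs where "zs = drop (length xs div 2) xs"
    have "2 \<le> length xs" using False length_greater_0_conv[of xs] \<open>xs \<noteq> []\<close> by linarith
    then have Mt: "Mtree p xs = malpha p (Mtree p ys) (Mtree p zs)"
      unfolding ys_def zs_def by (rule Mtree_split)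
    have ys: "ys \<noteq> []" "length ys \<le> 2 ^ k" and zs: "zs \<noteq> []" "length zs \<le> 2 ^ k"
      using \<open>2 \<le> length xs\<close> Suc.prems(2) unfolding ys_def zs_def by auto
    have ys_between: "\<forall>x\<in>set ys. c \<le> x \<and> x \<le> 1 - c"
      and zs_between: "\<forall>x\<in>set zs. c \<le> x \<and> x \<le> 1 - c"
      using Suc.prems(3) by (auto simp: ys_def zs_def dest: in_set_takeD in_set_dropD)
    have "real k * \<epsilon> \<le> c" "(real k - 1) * \<epsilon> \<le> c"
      using Suc.prems(4) \<open>\<epsilon> \<ge> 0\<close> by (simp_all add: algebra_simps)
    have IH: "\<bar>Mtree p ys - Max (set ys)\<bar> \<le> real k * \<epsilon>" "\<bar>Mtree p zs - Max (set zs)\<bar> \<le> real k * \<epsilon>"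
      using Suc.IH[OF ys ys_between] Suc.IH[OF zs zs_between] \<open>(real k - 1) * \<epsilon> \<le> c\<close> by auto
    have "c \<le> Max (set ys) \<and> Max (set ys) \<le> 1 - c" "c \<le> Max (set zs) \<and> Max (set zs) \<le> 1 - c"
      using Max_set_between[OF ys(1) ys_between] Max_set_between[OF zs(1) zs_between] by auto
    with IH \<open>real k * \<epsilon> \<le> c\<close> have "Mtree p ys \<in> {0..1}" "Mtree p zs \<in> {0..1}"
      by auto
    then have "\<bar>malpha p (Mtree p ys) (Mtree p zs) - max (Mtree p ys) (Mtree p zs)\<bar> \<le> \<epsilon>"
      using p by simp
    moreover have "Max (set xs) = max (Max (set ys)) (Max (set zs))"
      using ys(1) zs(1) Max_Un[of "set ys" "set zs"] by (simp add: ys_def zs_def flip: set_append)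
    moreover have "\<bar>max (Mtree p ys) (Mtree p zs) - max (Max (set ys)) (Max (set zs))\<bar> \<le> real k * \<epsilon>"
      using IH by (auto simp: max_def abs_le_iff)
    ultimately show ?thesis
      unfolding Mt by (simp add: algebra_simps)
  qed
qed

lemma le_two_power_nat_ceiling_log:
  assumes "n \<ge> 1"
  shows "n \<le> 2 ^ nat \<lceil>log 2 (real n)\<rceil>"
proof -
  have "real n = 2 powr log 2 (real n)"
    using assms by simp
  also have "\<dots> \<le> 2 powr real (nat \<lceil>log 2 (real n)\<rceil>)"
    by (intro powr_mono) linarith+
  also have "\<dots> = real (2 ^ nat \<lceil>log 2 (real n)\<rceil>)"
    by (simp add: powr_realpow)
  finally show ?thesis
    by linarith
qed

lemma ceiling_log2_nonneg:
  assumes "n \<ge> 1"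
  shows "\<lceil>log 2 (real n)\<rceil> \<ge> 0"
proof -
  have "log 2 (real n) \<ge> 0"
    using assms by (subst zero_le_log_cancel_iff) auto
  then show ?thesis
    by simp
qed

lemma Mtilde_approx_Max:
  fixes ys :: "real list" and \<alpha> :: real
  defines "L \<equiv> \<lceil>log 2 (real (length ys))\<rceil>"
  assumes p: "\<forall>a\<in>{0..1}. \<forall>b\<in>{0..1}. \<bar>malpha p a b - max a b\<bar> \<le> 2 powr (-\<alpha>)"
    and "B > 0" "ys \<noteq> []" and ys_bound: "\<forall>y\<in>set ys. \<bar>y\<bar> \<le> B"
    and den_pos: "0.5 - (real_of_int L - 1) * 2 powr (-\<alpha>) > 0"
  shows "\<bar>Mtilde p \<alpha> (length ys) B ys - Max (set ys)\<bar>
           \<le> B / (0.5 - (real_of_int L - 1) * 2 powr (-\<alpha>)) * (real_of_int L * 2 powr (-\<alpha>))"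
proof -
  define den where "den = 0.5 - (real_of_int L - 1) * 2 powr (-\<alpha>)"
  have "den > 0" using den_pos unfolding den_def .
  define k where "k = nat L"
  have "length ys \<ge> 1"
    using \<open>ys \<noteq> []\<close> by (simp add: Suc_le_eq)
  then have "L \<ge> 0"
    unfolding L_def by (rule ceiling_log2_nonneg)
  then have k: "real k = real_of_int L"
    unfolding k_def by simp
  have "length ys \<le> 2 ^ k"
    using \<open>length ys \<ge> 1\<close> unfolding k_def L_def by (rule le_two_power_nat_ceiling_log)
  define B' where "B' = B / den"
  have "B' > 0" unfolding B'_def using \<open>B > 0\<close> \<open>den > 0\<close> by simp
  define zs where "zs = map (\<lambda>y. y / B' + 0.5) ys"
  have "\<forall>z\<in>set zs. 0.5 - den \<le> z \<and> z \<le> 1 - (0.5 - den)"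
  proof
    fix z assume "z \<in> set zs"
    then obtain y where "\<bar>y\<bar> \<le> B" "z = y / B' + 0.5"
      using ys_bound unfolding zs_def by auto
    have "\<bar>y / B'\<bar> = den * (\<bar>y\<bar> / B)"
      using \<open>B > 0\<close> \<open>den > 0\<close> unfolding B'_def by (simp add: abs_divide abs_mult)
    also have "\<dots> \<le> den"
      using \<open>\<bar>y\<bar> \<le> B\<close> \<open>B > 0\<close> \<open>den > 0\<close> by (intro mult_left_le) auto
    finally show "0.5 - den \<le> z \<and> z \<le> 1 - (0.5 - den)"
      using \<open>z = y / B' + 0.5\<close> by linarith
  qed
  moreover have "(real k - 1) * 2 powr (-\<alpha>) \<le> 0.5 - den"
    unfolding den_def k by simp
  ultimately have approx: "\<bar>Mtree p zs - Max (set zs)\<bar> \<le> real k * 2 powr (-\<alpha>)"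
    using \<open>ys \<noteq> []\<close> \<open>length ys \<le> 2 ^ k\<close> unfolding zs_def by (intro Mtree_approx_Max[OF p]) auto
  have "Max (set zs) = Max (set ys) / B' + 0.5"
    using mono_Max_commute[of "\<lambda>y. y / B' + 0.5" "set ys"] \<open>B' > 0\<close> \<open>ys \<noteq> []\<close>
    unfolding zs_def by (simp add: mono_def divide_right_mono)
  moreover have "Mtilde p \<alpha> (length ys) B ys = B' * (Mtree p zs - 0.5)"
    unfolding Mtilde_def B'_def den_def L_def zs_def by (simp add: Let_def)
  ultimately have "Mtilde p \<alpha> (length ys) B ys - Max (set ys) = B' * (Mtree p zs - Max (set zs))"
    using \<open>B' > 0\<close> by (simp add: algebra_simps)
  then have "\<bar>Mtilde p \<alpha> (length ys) B ys - Max (set ys)\<bar> = B' * \<bar>Mtree p zs - Max (set zs)\<bar>"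
    using \<open>B' > 0\<close> by (simp add: abs_mult)
  also have "\<dots> \<le> B' * (real_of_int L * 2 powr (-\<alpha>))"
    using approx \<open>B' > 0\<close> unfolding k by simp
  finally show ?thesis
    unfolding B'_def den_def .
qed

lemma Mtilde_denominator_ge:
  assumes "1 \<le> n" "n \<le> 100" "\<alpha> \<ge> 4"
  shows "1 / 8 \<le> 0.5 - (real_of_int \<lceil>log 2 (real n)\<rceil> - 1) * 2 powr (-\<alpha>)"
proof -
  have "2 powr (-\<alpha>) \<le> 2 powr (-4)"
    using \<open>\<alpha> \<ge> 4\<close> by (intro powr_mono) auto
  then have \<epsilon>: "2 powr (-\<alpha>) \<le> 1 / 16"
    by (simp add: powr_minus)
  have "log 2 (real n) \<le> real 7"
    using assms(1,2) by (intro log2_of_power_le) auto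
  then have "\<lceil>log 2 (real n)\<rceil> \<le> 7"
    by linarith
  then have "real_of_int \<lceil>log 2 (real n)\<rceil> - 1 \<le> 6"
    by simp
  then have "(real_of_int \<lceil>log 2 (real n)\<rceil> - 1) * 2 powr (-\<alpha>) \<le> 6 * 2 powr (-\<alpha>)"
    by (rule mult_right_mono) simp
  also have "\<dots> \<le> 6 * (1 / 16)"
    using \<epsilon> by simp
  finally show ?thesis
    by simp
qed

lemma Mtilde_approx_Max_le_100:
  assumes p: "\<forall>a\<in>{0..1}. \<forall>b\<in>{0..1}. \<bar>malpha p a b - max a b\<bar> \<le> 2 powr (-\<alpha>)"
    and "\<alpha> \<ge> 4" "B > 0" "ys \<noteq> []" "length ys \<le> 100" "\<forall>y\<in>set ys. \<bar>y\<bar> \<le> B"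
  shows "\<bar>Mtilde p \<alpha> (length ys) B ys - Max (set ys)\<bar>
           \<le> 10 * B * real_of_int \<lceil>log 2 (real (length ys))\<rceil> * 2 powr (-\<alpha>)"
proof -
  let ?L = "real_of_int \<lceil>log 2 (real (length ys))\<rceil>"
  let ?den = "0.5 - (?L - 1) * 2 powr (-\<alpha>)"
  have "1 \<le> length ys"
    using \<open>ys \<noteq> []\<close> by (simp add: Suc_le_eq)
  then have den: "1 / 8 \<le> ?den"
    using Mtilde_denominator_ge assms(2,5) by blast
  have "0 \<le> ?L"
    using ceiling_log2_nonneg[OF \<open>1 \<le> length ys\<close>] by simp
  have "B / ?den \<le> B / (1 / 8)"
    using den \<open>B > 0\<close> by (intro divide_left_mono) auto
  also have "\<dots> \<le> 10 * B"
    using \<open>B > 0\<close> by simp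
  finally have "B / ?den \<le> 10 * B" .
  then have "B / ?den * (?L * 2 powr (-\<alpha>)) \<le> 10 * B * (?L * 2 powr (-\<alpha>))"
    using \<open>0 \<le> ?L\<close> by (intro mult_right_mono) auto
  moreover have "\<bar>Mtilde p \<alpha> (length ys) B ys - Max (set ys)\<bar> \<le> B / ?den * (?L * 2 powr (-\<alpha>))"
    using den assms by (intro Mtilde_approx_Max[OF p]) auto
  ultimately show ?thesis
    by (simp add: mult.assoc)
qed

lemma Max_image_diff_le:
  fixes f g :: "'a \<Rightarrow> real"
  assumes "finite A" "A \<noteq> {}" "\<And>a. a \<in> A \<Longrightarrow> \<bar>f a - g a\<bar> \<le> e"
  shows "\<bar>Max (f ` A) - Max (g ` A)\<bar> \<le> e"
proof -
  have "Max (f ` A) \<in> f ` A" "Max (g ` A) \<in> g ` A"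
    using assms(1,2) by (simp_all add: Max_in)
  then obtain a b where "a \<in> A" "Max (f ` A) = f a" "b \<in> A" "Max (g ` A) = g b"
    by blast
  have "g a \<le> Max (g ` A)" "f b \<le> Max (f ` A)"
    using \<open>a \<in> A\<close> \<open>b \<in> A\<close> assms(1) by auto
  then show ?thesis
    using assms(3)[OF \<open>a \<in> A\<close>] assms(3)[OF \<open>b \<in> A\<close>] \<open>Max (f ` A) = f a\<close> \<open>Max (g ` A) = g b\<close>
    by (auto simp: abs_le_iff)
qed

lemma blockerr_max_pool:
  fixes win :: "'q::finite \<Rightarrow> nat \<Rightarrow> 'r::finite"
  assumes p: "\<forall>a\<in>{0..1}. \<forall>b\<in>{0..1}. \<bar>malpha p a b - max a b\<bar> \<le> 2 powr (-\<alpha>)"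
    and "\<alpha> \<ge> 4" "B > 0" "1 \<le> n" "n \<le> 100"
  shows "blockerr B (\<lambda>x. \<chi> i. Max {x $ win i j | j. j < n})
                    (\<lambda>x. \<chi> i. Mtilde p \<alpha> n B (map (\<lambda>j. x $ win i j) [0..<n])) e
           \<le> ereal (10 * B * real_of_int \<lceil>log 2 (real n)\<rceil> * 2 powr (-\<alpha>) + e)"
proof (rule blockerr_le_coordinatewise)
  fix x d :: "real^'r" and i
  assume "\<And>j. \<bar>(x + d) $ j\<bar> \<le> B" "\<And>j. \<bar>d $ j\<bar> \<le> e"
  define ys where "ys = map (\<lambda>j. (x + d) $ win i j) [0..<n]"
  have "length ys = n" "ys \<noteq> []" "set ys = (\<lambda>j. (x + d) $ win i j) ` {..<n}"
    using \<open>1 \<le> n\<close> unfolding ys_def by auto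
  then have "\<bar>Mtilde p \<alpha> n B ys - Max ((\<lambda>j. (x + d) $ win i j) ` {..<n})\<bar>
               \<le> 10 * B * real_of_int \<lceil>log 2 (real n)\<rceil> * 2 powr (-\<alpha>)"
    using Mtilde_approx_Max_le_100[OF p, of B ys] assms(2,3,5) \<open>\<And>j. \<bar>(x + d) $ j\<bar> \<le> B\<close>
    by auto
  moreover have "\<bar>Max ((\<lambda>j. (x + d) $ win i j) ` {..<n}) - Max ((\<lambda>j. x $ win i j) ` {..<n})\<bar> \<le> e"
    using \<open>1 \<le> n\<close> \<open>\<And>j. \<bar>d $ j\<bar> \<le> e\<close> by (intro Max_image_diff_le) (auto simp: lessThan_empty_iff)
  moreover have "{x $ win i j | j. j < n} = (\<lambda>j. x $ win i j) ` {..<n}"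
    by auto
  ultimately show "\<bar>(\<chi> i. Mtilde p \<alpha> n B (map (\<lambda>j. (x + d) $ win i j) [0..<n])) $ i -
                     (\<chi> i. Max {x $ win i j | j. j < n}) $ i\<bar>
                   \<le> 10 * B * real_of_int \<lceil>log 2 (real n)\<rceil> * 2 powr (-\<alpha>) + e"
    unfolding ys_def by simp
qed

theorem lemma1:
  fixes B \<alpha> :: real and p :: "real poly"
  assumes "B > 1" and "\<alpha> > 0"
    and "\<forall>a\<in>{0..1}. \<forall>b\<in>{0..1}. \<bar>malpha p a b - max a b\<bar> \<le> 2 powr (-\<alpha>)"
  shows
   "(\<forall>(M :: real^'n^'m) (b :: real^'m) e. e \<ge> 0 \<longrightarrow>
       blockerr B (\<lambda>x. M *v x + b) (\<lambda>x. M *v x + b) e \<le> ereal (matinfnorm M * e))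
  \<and> (\<forall>e \<ge> 0. blockerr B (\<lambda>x :: real^'k. \<chi> i. max (x $ i) 0) (\<lambda>x. \<chi> i. rtilde p B (x $ i)) e
       \<le> ereal (B * 2 powr (-\<alpha>) + e))
  \<and> (\<forall>(k0 :: nat) (win :: 'q::finite \<Rightarrow> nat \<Rightarrow> 'r::finite) e.
       1 \<le> k0 \<longrightarrow> k0 \<le> 10 \<longrightarrow> \<alpha> \<ge> 4 \<longrightarrow> e \<ge> 0 \<longrightarrow>
       (\<forall>i. inj_on (win i) {..<k0^2}) \<longrightarrow>
       blockerr B (\<lambda>x. \<chi> i. Max {x $ win i j | j. j < k0^2})
                  (\<lambda>x. \<chi> i. Mtilde p \<alpha> (k0^2) B (map (\<lambda>j. x $ win i j) [0..<k0^2])) e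
       \<le> ereal (10 * B * real_of_int \<lceil>log 2 (real (k0^2))\<rceil> * 2 powr (-\<alpha>) + e))
  \<and> (\<forall>e \<ge> 0. blockerr B (\<lambda>x :: real^'s. \<chi> i. exp (x $ i) / (\<Sum>j\<in>UNIV. exp (x $ j)))
                        (\<lambda>x. \<chi> i. exp (x $ i) / (\<Sum>j\<in>UNIV. exp (x $ j))) e
       \<le> ereal (e / 2))"
proof (intro conjI allI impI)
  have "B > 0" using \<open>B > 1\<close> by simp
  fix e :: real
  show "blockerr B (\<lambda>x :: real^'k. \<chi> i. max (x $ i) 0) (\<lambda>x. \<chi> i. rtilde p B (x $ i)) e
          \<le> ereal (B * 2 powr (-\<alpha>) + e)"
    using blockerr_relu[OF assms(3) \<open>B > 0\<close>] .
next
  fix k0 :: nat and win :: "'q \<Rightarrow> nat \<Rightarrow> 'r" and e :: real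
  assume "1 \<le> k0" "k0 \<le> 10" "\<alpha> \<ge> 4"
  moreover have "k0^2 \<le> 10^2"
    using \<open>k0 \<le> 10\<close> by (rule power_mono) simp
  ultimately have "1 \<le> k0^2" "k0^2 \<le> 100"
    by simp_all
  then show "blockerr B (\<lambda>x. \<chi> i. Max {x $ win i j | j. j < k0^2})
               (\<lambda>x. \<chi> i. Mtilde p \<alpha> (k0^2) B (map (\<lambda>j. x $ win i j) [0..<k0^2])) e
             \<le> ereal (10 * B * real_of_int \<lceil>log 2 (real (k0^2))\<rceil> * 2 powr (-\<alpha>) + e)"
    using \<open>B > 1\<close> by (intro blockerr_max_pool[OF assms(3) \<open>\<alpha> \<ge> 4\<close>]) simp_all
qed (simp_all add: blockerr_affine blockerr_softmax)

end
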